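(* Let $\mathcal X,\mathcal Y$ be complex Hilbert spaces and $A:\mathcal X\supset\operatorname{dom}A\to\mathcal Y$ a closed, densely defined linear operator such that $A^*A$ is uniformly positive, i.e. there is $c>0$ with $\|Ax\|_{\mathcal Y}\ge c\|x\|_{\mathcal X}$ for all $x\in\operatorname{dom}A$. Let $\mathcal Y_1:=\operatorname{ran}A$, regarded as a Hilbert space with the inner product of $\mathcal Y$. Let $B:\mathcal Y\supset\operatorname{dom}B\to\mathcal X$ be a closed, densely defined linear operator with $A^*\subset -B$. Define $B_{\mathcal Y_1}:\mathcal Y_1\supset\operatorname{dom}B\cap\mathcal Y_1\to\mathcal X$ by $B_{\mathcal Y_1}y=By$. Then $B_{\mathcal Y_1}$ is a closed and densely defined operator from $\mathcal Y_1$ to $\mathcal X$.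
   Context: Under the stated hypotheses $\operatorname{ran}A$ is a closed subspace of $\mathcal Y$, so $\mathcal Y_1$ is a Hilbert space. $A^*\subset -B$ means $\operatorname{dom}A^*\subset\operatorname{dom}B$ and $By=-A^*y$ for $y\in\operatorname{dom}A^*$. *)

theory Defs
  imports "HOL-Analysis.Analysis"
begin

text \<open>Complex inner product spaces (the library only has real ones).
  The inner product is linear in the first argument, conjugate-linear in the second.\<close>

class complex_inner = real_normed_vector +
  fixes scaleC :: "complex \<Rightarrow> 'a \<Rightarrow> 'a"
    and cinner :: "'a \<Rightarrow> 'a \<Rightarrow> complex"
  assumes scaleC_add_right: "scaleC a (x + y) = scaleC a x + scaleC a y"
    and scaleC_add_left: "scaleC (a + b) x = scaleC a x + scaleC b x"
    and scaleC_scaleC: "scaleC a (scaleC b x) = scaleC (a * b) x"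
    and scaleC_one: "scaleC 1 x = x"
    and scaleC_of_real: "scaleC (complex_of_real r) x = scaleR r x"
    and cinner_conj: "cinner x y = cnj (cinner y x)"
    and cinner_add_left: "cinner (x + y) z = cinner x z + cinner y z"
    and cinner_scaleC_left: "cinner (scaleC a x) y = a * cinner x y"
    and cinner_self: "cinner x x = complex_of_real ((norm x)\<^sup>2)"

class complex_hilbert = complex_inner + complete_space

definition csubspace :: "'a::complex_inner set \<Rightarrow> bool" where
  "csubspace S \<longleftrightarrow> 0 \<in> S \<and> (\<forall>x\<in>S. \<forall>y\<in>S. x + y \<in> S) \<and> (\<forall>a. \<forall>x\<in>S. scaleC a x \<in> S)"

definition linear_op :: "'a::complex_inner set \<Rightarrow> ('a \<Rightarrow> 'b::complex_inner) \<Rightarrow> bool" where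
  "linear_op D f \<longleftrightarrow> csubspace D \<and>
     (\<forall>x\<in>D. \<forall>y\<in>D. f (x + y) = f x + f y) \<and> (\<forall>a. \<forall>x\<in>D. f (scaleC a x) = scaleC a (f x))"

definition graph_op :: "'a set \<Rightarrow> ('a \<Rightarrow> 'b) \<Rightarrow> ('a \<times> 'b) set" where
  "graph_op D f = {(x, f x) | x. x \<in> D}"

definition closed_op_on :: "'a::topological_space set \<Rightarrow> 'a set \<Rightarrow> ('a \<Rightarrow> 'b::topological_space) \<Rightarrow> bool" where
  "closed_op_on S D f \<longleftrightarrow> D \<subseteq> S \<and> closedin (top_of_set (S \<times> UNIV)) (graph_op D f)"

definition densely_defined_on :: "'a::topological_space set \<Rightarrow> 'a set \<Rightarrow> bool" where
  "densely_defined_on S D \<longleftrightarrow> D \<subseteq> S \<and> S \<subseteq> closure D"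

definition adj_dom :: "'a::complex_inner set \<Rightarrow> ('a \<Rightarrow> 'b::complex_inner) \<Rightarrow> 'b set" where
  "adj_dom D f = {y. \<exists>z. \<forall>x\<in>D. cinner (f x) y = cinner x z}"

definition adj :: "'a::complex_inner set \<Rightarrow> ('a \<Rightarrow> 'b::complex_inner) \<Rightarrow> 'b \<Rightarrow> 'a" where
  "adj D f y = (SOME z. \<forall>x\<in>D. cinner (f x) y = cinner x z)"

end

theory Submission
  imports Defs
begin

text \<open>Since \<open>A\<close> is closed and bounded below, \<open>ran A\<close> is closed, so \<open>\<Y> = ran A \<oplus> (ran A)\<^sup>\<bottom>\<close>.
  Every \<open>z \<perp> ran A\<close> lies in \<open>dom A\<^sup>* \<subseteq> dom B\<close>, so the orthogonal projection onto
  \<open>ran A\<close> maps the dense set \<open>dom B\<close> into \<open>dom B \<inter> ran A\<close>, and its image is dense in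
  \<open>ran A\<close> because the projection does not increase distances to points of \<open>ran A\<close>.
  Closedness of the restriction is inherited from the graph of \<open>B\<close>.\<close>

lemma cinner_zero_left [simp]: "cinner 0 y = 0"
  using cinner_add_left[of 0 0 y] by simp

lemma cinner_zero_right [simp]: "cinner x 0 = 0"
  by (metis cinner_conj cinner_zero_left complex_cnj_zero)

lemma cinner_add_right: "cinner x (y + z) = cinner x y + cinner x z"
  by (metis cinner_add_left cinner_conj complex_cnj_add)

lemma cinner_minus_left: "cinner (- x) y = - cinner x y"
  using cinner_add_left[of x "- x" y] by (simp add: eq_neg_iff_add_eq_0 add.commute)

lemma cinner_minus_right: "cinner x (- y) = - cinner x y"
  by (metis cinner_conj cinner_minus_left complex_cnj_minus)

lemma cinner_scaleC_right: "cinner x (scaleC a y) = cnj a * cinner x y"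
  by (metis cinner_conj cinner_scaleC_left complex_cnj_mult)

lemma cinner_eq_zero_commute: "cinner x y = 0 \<longleftrightarrow> cinner y x = 0"
  by (metis cinner_conj complex_cnj_zero_iff)

lemma scaleC_minus1_left: "scaleC (-1) x = - x"
  by (metis of_real_1 of_real_minus scaleC_of_real scaleR_minus1_left)

lemma norm_add_sq: "(norm (x + y))\<^sup>2 = (norm x)\<^sup>2 + 2 * Re (cinner x y) + (norm y)\<^sup>2"
proof -
  have "cinner (x + y) (x + y) = cinner x x + cinner x y + cnj (cinner x y) + cinner y y"
    by (simp add: cinner_add_left cinner_add_right cinner_conj[of y x])
  then have "Re (cinner (x + y) (x + y)) = Re (cinner x x) + 2 * Re (cinner x y) + Re (cinner y y)"
    by simp
  then show ?thesis
    by (simp add: cinner_self)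
qed

lemma norm_diff_sq: "(norm (x - y))\<^sup>2 = (norm x)\<^sup>2 - 2 * Re (cinner x y) + (norm y)\<^sup>2"
  using norm_add_sq[of x "- y"] by (simp add: cinner_minus_right)

lemma norm_scaleC: "norm (scaleC a x) = cmod a * norm x"
proof -
  have "complex_of_real ((norm (scaleC a x))\<^sup>2) = a * cnj a * cinner x x"
    by (simp only: cinner_scaleC_left cinner_scaleC_right mult.assoc mult.left_commute
        flip: cinner_self)
  also have "\<dots> = complex_of_real ((cmod a * norm x)\<^sup>2)"
    by (simp add: cinner_self power_mult_distrib flip: complex_norm_square)
  finally show ?thesis
    by (metis norm_ge_zero of_real_eq_iff power2_eq_imp_eq zero_le_mult_iff)
qed

lemma parallelogram_law:
  fixes x y :: "'a::complex_inner"
  shows "(norm (x + y))\<^sup>2 + (norm (x - y))\<^sup>2 = 2 * (norm x)\<^sup>2 + 2 * (norm y)\<^sup>2"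
  using norm_add_sq[of x y] norm_diff_sq[of x y] by simp

lemma apollonius_identity:
  fixes y u v :: "'a::complex_inner"
  shows "(norm (u - v))\<^sup>2
    = 2 * (norm (y - u))\<^sup>2 + 2 * (norm (y - v))\<^sup>2 - 4 * (norm (y - scaleR (1/2) (u + v)))\<^sup>2"
proof -
  have "(y - u) + (y - v) = scaleR 2 (y - scaleR (1/2) (u + v))"
    by (simp add: algebra_simps scaleR_2)
  then have "(norm ((y - u) + (y - v)))\<^sup>2 = 4 * (norm (y - scaleR (1/2) (u + v)))\<^sup>2"
    by (simp add: power_mult_distrib)
  moreover have "(y - u) - (y - v) = v - u" by simp
  ultimately show ?thesis
    using parallelogram_law[of "y - u" "y - v"] by (simp add: norm_minus_commute)
qed

lemma csubspace_add: "csubspace S \<Longrightarrow> x \<in> S \<Longrightarrow> y \<in> S \<Longrightarrow> x + y \<in> S"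
  unfolding csubspace_def by blast

lemma csubspace_scaleC: "csubspace S \<Longrightarrow> x \<in> S \<Longrightarrow> scaleC a x \<in> S"
  unfolding csubspace_def by blast

lemma csubspace_diff: "csubspace S \<Longrightarrow> x \<in> S \<Longrightarrow> y \<in> S \<Longrightarrow> x - y \<in> S"
  using csubspace_add[of S x "scaleC (-1) y"] csubspace_scaleC[of S y "-1"]
  by (simp add: scaleC_minus1_left)

lemma csubspace_Int: "csubspace S \<Longrightarrow> csubspace T \<Longrightarrow> csubspace (S \<inter> T)"
  unfolding csubspace_def by blast

lemma csubspace_imp_convex: "csubspace S \<Longrightarrow> convex S"
  unfolding convex_def by (simp add: csubspace_add csubspace_scaleC flip: scaleC_of_real)

lemma linear_op_diff:
  assumes "linear_op D f" "x \<in> D" "y \<in> D"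
  shows "f (x - y) = f x - f y"
proof -
  have "scaleC (-1) y \<in> D"
    using assms csubspace_scaleC unfolding linear_op_def by blast
  then have "f (x + scaleC (-1) y) = f x + scaleC (-1) (f y)"
    using assms unfolding linear_op_def by simp
  then show ?thesis
    by (simp add: scaleC_minus1_left)
qed

lemma csubspace_range_linear_op:
  assumes "linear_op D f"
  shows "csubspace (f ` D)"
proof -
  have D: "csubspace D"
    and f_add: "\<And>x y. x \<in> D \<Longrightarrow> y \<in> D \<Longrightarrow> f (x + y) = f x + f y"
    and f_scaleC: "\<And>a x. x \<in> D \<Longrightarrow> f (scaleC a x) = scaleC a (f x)"
    using assms unfolding linear_op_def by auto
  have "f 0 = 0"
    using linear_op_diff[OF assms, of 0 0] D unfolding csubspace_def by simp
  then show ?thesis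
    using D unfolding csubspace_def
    by (auto simp flip: f_add f_scaleC intro!: image_eqI)
qed

lemma linear_op_restrict: "linear_op D f \<Longrightarrow> csubspace E \<Longrightarrow> linear_op (D \<inter> E) f"
  unfolding linear_op_def using csubspace_Int by blast

lemma closed_op_on_UNIV_iff: "closed_op_on UNIV D f \<longleftrightarrow> closed (graph_op D f)"
  by (simp add: closed_op_on_def)

lemma closed_op_on_restrict:
  assumes "closed (graph_op D f)"
  shows "closed_op_on S (D \<inter> S) f"
proof -
  have "graph_op (D \<inter> S) f = (S \<times> UNIV) \<inter> graph_op D f"
    unfolding graph_op_def by auto
  then show ?thesis
    unfolding closed_op_on_def closedin_closed using assms by blast
qed

lemma orthogonal_range_subset_adj_dom:
  assumes "\<forall>w\<in>f ` D. cinner z w = 0"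
  shows "z \<in> adj_dom D f"
  unfolding adj_dom_def using assms cinner_eq_zero_commute
  by (intro CollectI exI[of _ 0]) auto

lemma closed_range_if_bounded_below:
  fixes f :: "'a::complex_hilbert \<Rightarrow> 'b::complex_inner"
  assumes f: "linear_op D f" and graph: "closed (graph_op D f)"
    and c: "c > 0" "\<And>x. x \<in> D \<Longrightarrow> c * norm x \<le> norm (f x)"
  shows "closed (f ` D)"
  unfolding closed_sequential_limits
proof (intro allI impI, elim conjE)
  fix y l
  assume "\<forall>n. y n \<in> f ` D" and y_lim: "y \<longlonglongrightarrow> l"
  then have "\<forall>n. \<exists>z. z \<in> D \<and> y n = f z"
    by blast
  then obtain x where x_in: "\<And>n. x n \<in> D" and y_eq: "\<And>n. y n = f (x n)"
    by metis
  have "Cauchy x"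
  proof (rule CauchyI)
    fix e :: real
    assume "e > 0"
    then obtain N where N: "\<forall>m\<ge>N. \<forall>n\<ge>N. norm (y m - y n) < c * e"
      using CauchyD[OF LIMSEQ_imp_Cauchy[OF y_lim], of "c * e"] c(1) by auto
    have "norm (x m - x n) < e" if "m \<ge> N" "n \<ge> N" for m n
    proof -
      have "x m - x n \<in> D"
        using f x_in csubspace_diff unfolding linear_op_def by blast
      then have "c * norm (x m - x n) \<le> norm (y m - y n)"
        by (simp add: c(2) y_eq flip: linear_op_diff[OF f x_in x_in])
      then show ?thesis
        using N that c(1) by (meson mult_less_cancel_left_pos order_le_less_trans)
    qed
    then show "\<exists>N. \<forall>m\<ge>N. \<forall>n\<ge>N. norm (x m - x n) < e"
      by blast
  qed
  then obtain x\<^sub>0 where x_lim: "x \<longlonglongrightarrow> x\<^sub>0"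
    using Cauchy_convergent convergent_def by blast
  have "(x n, y n) \<in> graph_op D f" for n
    using x_in y_eq unfolding graph_op_def by blast
  moreover have "(\<lambda>n. (x n, y n)) \<longlonglongrightarrow> (x\<^sub>0, l)"
    using x_lim y_lim by (rule tendsto_Pair)
  ultimately have "(x\<^sub>0, l) \<in> graph_op D f"
    by (rule closed_sequentially[OF graph])
  then show "l \<in> f ` D"
    unfolding graph_op_def by blast
qed

lemma Cauchy_if_norm_diff_sq_le:
  fixes f :: "nat \<Rightarrow> 'a::real_normed_vector"
  assumes bound: "\<And>m n. (norm (f m - f n))\<^sup>2 \<le> r m + r n" and r: "r \<longlonglongrightarrow> 0"
  shows "Cauchy f"
proof (rule CauchyI)
  fix e :: real
  assume "e > 0"
  then obtain N where N: "\<And>n. n \<ge> N \<Longrightarrow> r n < e\<^sup>2 / 2"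
    using LIMSEQ_D[OF r, of "e\<^sup>2 / 2"] by fastforce
  have "norm (f m - f n) < e" if "m \<ge> N" "n \<ge> N" for m n
  proof -
    have "(norm (f m - f n))\<^sup>2 < e\<^sup>2"
      using bound[of m n] N[OF that(1)] N[OF that(2)] by linarith
    then show ?thesis
      using \<open>e > 0\<close> by (simp add: power_less_imp_less_base)
  qed
  then show "\<exists>N. \<forall>m\<ge>N. \<forall>n\<ge>N. norm (f m - f n) < e"
    by blast
qed

text \<open>The Hilbert projection theorem: a minimising sequence is Cauchy by the parallelogram law.\<close>

lemma nearest_point_exists:
  fixes y :: "'a::complex_hilbert"
  assumes K: "closed K" "convex K" "K \<noteq> {}"
  shows "\<exists>p\<in>K. \<forall>k\<in>K. norm (y - p) \<le> norm (y - k)"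
proof -
  define d where "d = (INF k\<in>K. (norm (y - k))\<^sup>2)"
  have bdd: "bdd_below ((\<lambda>k. (norm (y - k))\<^sup>2) ` K)"
    by (rule bdd_belowI2[of _ 0]) simp
  have d_le: "d \<le> (norm (y - k))\<^sup>2" if "k \<in> K" for k
    unfolding d_def using bdd that by (rule cINF_lower)
  have "\<exists>k\<in>K. (norm (y - k))\<^sup>2 < d + inverse (real (Suc n))" for n
    using cINF_less_iff[OF K(3) bdd, of "d + inverse (real (Suc n))"] unfolding d_def by simp
  then obtain x where x_in: "\<And>n. x n \<in> K"
    and x_near: "\<And>n. (norm (y - x n))\<^sup>2 < d + inverse (real (Suc n))"
    by (metis (no_types))
  have "(norm (x m - x n))\<^sup>2 \<le> 2 * inverse (real (Suc m)) + 2 * inverse (real (Suc n))" for m n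
  proof -
    have "scaleR (1/2) (x m + x n) \<in> K"
      using convexD[OF K(2) x_in x_in, of "1/2" "1/2"] by (simp add: scaleR_right_distrib)
    then have "d \<le> (norm (y - scaleR (1/2) (x m + x n)))\<^sup>2"
      by (rule d_le)
    then show ?thesis
      using apollonius_identity[of "x m" "x n" y] x_near[of m] x_near[of n] by linarith
  qed
  moreover have "(\<lambda>n. 2 * inverse (real (Suc n))) \<longlonglongrightarrow> 0"
    using tendsto_mult_right_zero[OF LIMSEQ_inverse_real_of_nat] .
  ultimately have "Cauchy x"
    by (rule Cauchy_if_norm_diff_sq_le)
  then obtain p where p: "x \<longlonglongrightarrow> p"
    using Cauchy_convergent convergent_def by blast
  have "p \<in> K"
    using closed_sequentially[OF K(1)] x_in p by blast
  have "(\<lambda>n. (norm (y - x n))\<^sup>2) \<longlonglongrightarrow> (norm (y - p))\<^sup>2"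
    using p by (intro tendsto_intros)
  moreover have "(\<lambda>n. d + inverse (real (Suc n))) \<longlonglongrightarrow> d"
    using tendsto_add[OF tendsto_const LIMSEQ_inverse_real_of_nat, of d] by simp
  moreover have "\<forall>n. (norm (y - x n))\<^sup>2 \<le> d + inverse (real (Suc n))"
    using x_near less_imp_le by blast
  ultimately have "(norm (y - p))\<^sup>2 \<le> d"
    by (blast intro: LIMSEQ_le)
  then have "norm (y - p) \<le> norm (y - k)" if "k \<in> K" for k
    using d_le[OF that] by (simp add: power2_le_imp_le)
  then show ?thesis
    using \<open>p \<in> K\<close> by blast
qed

lemma nearest_point_orthogonal:
  fixes y :: "'a::complex_inner"
  assumes M: "csubspace M" and p: "p \<in> M"
    and nearest: "\<And>k. k \<in> M \<Longrightarrow> norm (y - p) \<le> norm (y - k)" and m: "m \<in> M"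
  shows "cinner (y - p) m = 0"
proof (cases "m = 0")
  case True
  then show ?thesis by simp
next
  case False
  define z a where "z = y - p" and "a = cinner z m"
  \<comment> \<open>the optimal coefficient: \<open>\<parallel>z - t m\<parallel>\<^sup>2 = \<parallel>z\<parallel>\<^sup>2 - \<bar>a\<bar>\<^sup>2 / \<parallel>m\<parallel>\<^sup>2\<close>\<close>
  define t where "t = a / of_real ((norm m)\<^sup>2)"
  have "cmod t = cmod a / (norm m)\<^sup>2"
    by (simp add: t_def norm_divide norm_power)
  then have "(norm (scaleC t m))\<^sup>2 = (cmod a)\<^sup>2 / (norm m)\<^sup>2"
    using False by (simp add: norm_scaleC power_mult_distrib power_divide power2_eq_square)
  moreover have "Re (cinner z (scaleC t m)) = (cmod a)\<^sup>2 / (norm m)\<^sup>2"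
    by (simp add: cinner_scaleC_right t_def flip: a_def)
      (simp add: cmod_power2 flip: power2_eq_square)
  moreover have "p + scaleC t m \<in> M"
    using M p m by (simp add: csubspace_add csubspace_scaleC)
  then have "norm z \<le> norm (z - scaleC t m)"
    using nearest[of "p + scaleC t m"] by (simp add: z_def diff_diff_eq)
  then have "(norm z)\<^sup>2 \<le> (norm (z - scaleC t m))\<^sup>2"
    by (simp add: power_mono)
  ultimately have "(cmod a)\<^sup>2 / (norm m)\<^sup>2 \<le> 0"
    by (simp add: norm_diff_sq)
  then show ?thesis
    using False by (simp add: a_def z_def divide_le_0_iff)
qed

lemma orthogonal_projection_exists:
  fixes y :: "'a::complex_hilbert"
  assumes "closed M" "csubspace M"
  shows "\<exists>p\<in>M. \<forall>m\<in>M. cinner (y - p) m = 0"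
proof -
  have "M \<noteq> {}"
    using \<open>csubspace M\<close> unfolding csubspace_def by blast
  then obtain p where "p \<in> M" "\<forall>k\<in>M. norm (y - p) \<le> norm (y - k)"
    using nearest_point_exists assms csubspace_imp_convex by blast
  then show ?thesis
    using nearest_point_orthogonal[OF \<open>csubspace M\<close>] by blast
qed

text \<open>The projection onto \<open>M\<close> of a point \<open>y \<in> D\<close> stays in \<open>D\<close> and is at least as close
  as \<open>y\<close> to every point of \<open>M\<close>.\<close>

lemma closed_csubspace_subset_closure_Int:
  fixes D M :: "'a::complex_hilbert set"
  assumes M: "closed M" "csubspace M" and D: "csubspace D" "closure D = UNIV"
    and orthogonal_in_D: "\<And>z. \<forall>m\<in>M. cinner z m = 0 \<Longrightarrow> z \<in> D"
  shows "M \<subseteq> closure (D \<inter> M)"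
proof
  fix m
  assume "m \<in> M"
  show "m \<in> closure (D \<inter> M)"
    unfolding closure_approachable
  proof (intro allI impI)
    fix e :: real
    assume "e > 0"
    then obtain y where "y \<in> D" "dist y m < e"
      using D(2) closure_approachable by blast
    obtain p where "p \<in> M" and p_orth: "\<forall>k\<in>M. cinner (y - p) k = 0"
      using orthogonal_projection_exists[OF M] by blast
    from p_orth have "y - p \<in> D"
      by (rule orthogonal_in_D)
    then have "p \<in> D"
      using csubspace_diff[OF D(1) \<open>y \<in> D\<close>] by force
    have "cinner (p - m) (y - p) = 0"
      using p_orth csubspace_diff[OF M(2) \<open>p \<in> M\<close> \<open>m \<in> M\<close>] cinner_eq_zero_commute by blast
    then have "(norm (y - m))\<^sup>2 = (norm (p - m))\<^sup>2 + (norm (y - p))\<^sup>2"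
      using norm_add_sq[of "p - m" "y - p"] by simp
    then have "dist p m \<le> dist y m"
      by (simp add: dist_norm power2_le_imp_le)
    then show "\<exists>x\<in>D \<inter> M. dist x m < e"
      using \<open>p \<in> D\<close> \<open>p \<in> M\<close> \<open>dist y m < e\<close> by (intro bexI[of _ p]) auto
  qed
qed

theorem lemma3p1:
  fixes DA :: "'x::complex_hilbert set" and A :: "'x \<Rightarrow> 'y::complex_hilbert"
    and DB :: "'y set" and B :: "'y \<Rightarrow> 'x"
  assumes A_lin: "linear_op DA A"
    and A_closed: "closed_op_on UNIV DA A"
    and A_dense: "densely_defined_on UNIV DA"
    and A_unif_pos: "\<exists>c>0. \<forall>x\<in>DA. norm (A x) \<ge> c * norm x"
    and B_lin: "linear_op DB B"
    and B_closed: "closed_op_on UNIV DB B"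
    and B_dense: "densely_defined_on UNIV DB"
    and adj_sub: "\<forall>y\<in>adj_dom DA A. y \<in> DB \<and> B y = - adj DA A y"
  shows "linear_op (DB \<inter> A ` DA) B
       \<and> closed_op_on (A ` DA) (DB \<inter> A ` DA) B
       \<and> densely_defined_on (A ` DA) (DB \<inter> A ` DA)"
proof -
  obtain c where "c > 0" "\<And>x. x \<in> DA \<Longrightarrow> c * norm x \<le> norm (A x)"
    using A_unif_pos by auto
  then have ran_closed: "closed (A ` DA)"
    using closed_range_if_bounded_below A_lin A_closed closed_op_on_UNIV_iff by blast
  have ran_csubspace: "csubspace (A ` DA)"
    using A_lin by (rule csubspace_range_linear_op)
  have DB: "csubspace DB" "closure DB = UNIV"
    using B_lin B_dense unfolding linear_op_def densely_defined_on_def by auto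
  have "z \<in> DB" if "\<forall>w\<in>A ` DA. cinner z w = 0" for z
    using adj_sub orthogonal_range_subset_adj_dom[OF that] by blast
  then have "A ` DA \<subseteq> closure (DB \<inter> A ` DA)"
    using closed_csubspace_subset_closure_Int[OF ran_closed ran_csubspace DB] by blast
  then show ?thesis
    using linear_op_restrict[OF B_lin ran_csubspace] B_closed closed_op_on_UNIV_iff
      closed_op_on_restrict unfolding densely_defined_on_def by blast
qed

end
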